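(* Let $\mathcal{L}$ be an intuitionistic abstract logic. Then $(Expr_{\mathcal{L}},\le)$, with meet $\wedge$, join $\vee$, implication $\to$, least element $\bot$ and greatest element $\top$, is a Heyting algebra.
   Context: An abstract logic is a triple $\mathcal{L}=(Expr_{\mathcal{L}},Th_{\mathcal{L}},\mathcal{C}_{\mathcal{L}})$ where $Expr_{\mathcal{L}}$ is a set, $Th_{\mathcal{L}}$ a non-empty set of subsets of $Expr_{\mathcal{L}}$ (theories) closed under intersections of non-empty subfamilies, and $\mathcal{C}_{\mathcal{L}}$ a set of operations on $Expr_{\mathcal{L}}$. $\mathcal{L}$ is closed under union of chains if the union of every non-empty chain of theories is a theory. A theory $T$ is prime if $T=\bigcap\mathcal{T}$ with $\mathcal{T}\subseteq Th_{\mathcal{L}}$ non-empty finite implies $T\in\mathcal{T}$; totally prime if this holds for non-empty $\mathcal{T}$ of any size. $PTh_{\mathcal{L}}$, $TPTh_{\mathcal{L}}$ denote these sets. An intuitionistic abstract logic is one closed under union of chains with binary connectives $\vee,\wedge,\to$ and constants $\top,\bot$ such that for all $a,b$ and all $T\in TPTh_{\mathcal{L}}$: $a\vee b\in T$ iff $a\in T$ or $b\in T$; $a\wedge b\in T$ iff $a,b\in T$; $a\to b\in T$ iff for every totally prime $T'\supseteq T$, $a\in T'$ implies $b\in T'$; $\top$ lies in every theory and $\bot$ in none. The order: $a\le b$ iff $S_a\subseteq S_b$, where $S_a=\{P\in PTh_{\mathcal{L}}: a\in P\}$; the paper identifies $a,b$ when $a\le b$ and $b\le a$. *)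

theory Defs
  imports Main
begin

definition abstract_logic :: "'e set set \<Rightarrow> bool" where
  "abstract_logic Th \<longleftrightarrow> Th \<noteq> {} \<and> (\<forall>F. F \<subseteq> Th \<and> F \<noteq> {} \<longrightarrow> \<Inter>F \<in> Th)"

definition closed_union_chains :: "'e set set \<Rightarrow> bool" where
  "closed_union_chains Th \<longleftrightarrow>
     (\<forall>C. C \<subseteq> Th \<and> C \<noteq> {} \<and> (\<forall>X\<in>C. \<forall>Y\<in>C. X \<subseteq> Y \<or> Y \<subseteq> X) \<longrightarrow> \<Union>C \<in> Th)"

definition prime_theory :: "'e set set \<Rightarrow> 'e set \<Rightarrow> bool" where
  "prime_theory Th T \<longleftrightarrow> T \<in> Th \<and>
     (\<forall>F. F \<subseteq> Th \<and> F \<noteq> {} \<and> finite F \<and> T = \<Inter>F \<longrightarrow> T \<in> F)"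

definition totally_prime_theory :: "'e set set \<Rightarrow> 'e set \<Rightarrow> bool" where
  "totally_prime_theory Th T \<longleftrightarrow> T \<in> Th \<and>
     (\<forall>F. F \<subseteq> Th \<and> F \<noteq> {} \<and> T = \<Inter>F \<longrightarrow> T \<in> F)"

definition intuitionistic_abstract_logic ::
  "'e set set \<Rightarrow> ('e \<Rightarrow> 'e \<Rightarrow> 'e) \<Rightarrow> ('e \<Rightarrow> 'e \<Rightarrow> 'e) \<Rightarrow> ('e \<Rightarrow> 'e \<Rightarrow> 'e)
     \<Rightarrow> 'e \<Rightarrow> 'e \<Rightarrow> bool" where
  "intuitionistic_abstract_logic Th dsj cnj imp tp bt \<longleftrightarrow>
     abstract_logic Th \<and> closed_union_chains Th \<and>
     (\<forall>a b T. totally_prime_theory Th T \<longrightarrow>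
        (dsj a b \<in> T \<longleftrightarrow> a \<in> T \<or> b \<in> T) \<and>
        (cnj a b \<in> T \<longleftrightarrow> a \<in> T \<and> b \<in> T) \<and>
        (imp a b \<in> T \<longleftrightarrow>
           (\<forall>T'. totally_prime_theory Th T' \<and> T \<subseteq> T' \<longrightarrow> a \<in> T' \<longrightarrow> b \<in> T'))) \<and>
     (\<forall>T\<in>Th. tp \<in> T) \<and> (\<forall>T\<in>Th. bt \<notin> T)"

definition S_set :: "'e set set \<Rightarrow> 'e \<Rightarrow> 'e set set" where
  "S_set Th a = {P. prime_theory Th P \<and> a \<in> P}"

definition logic_le :: "'e set set \<Rightarrow> 'e \<Rightarrow> 'e \<Rightarrow> bool" where
  "logic_le Th a b \<longleftrightarrow> S_set Th a \<subseteq> S_set Th b"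

text \<open>Heyting algebra structure on a preorder, i.e. on its quotient by the induced
  equivalence (a \<le> b and b \<le> a): meet is a greatest lower bound, join a least
  upper bound, bt least, tp greatest, and imp is the relative pseudocomplement.\<close>
definition heyting_preorder ::
  "('e \<Rightarrow> 'e \<Rightarrow> bool) \<Rightarrow> ('e \<Rightarrow> 'e \<Rightarrow> 'e) \<Rightarrow> ('e \<Rightarrow> 'e \<Rightarrow> 'e) \<Rightarrow> ('e \<Rightarrow> 'e \<Rightarrow> 'e)
     \<Rightarrow> 'e \<Rightarrow> 'e \<Rightarrow> bool" where
  "heyting_preorder le meet join imp bt tp \<longleftrightarrow>
     (\<forall>a. le a a) \<and> (\<forall>a b c. le a b \<longrightarrow> le b c \<longrightarrow> le a c) \<and>
     (\<forall>a b. le (meet a b) a \<and> le (meet a b) b \<and> (\<forall>c. le c a \<and> le c b \<longrightarrow> le c (meet a b))) \<and>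
     (\<forall>a b. le a (join a b) \<and> le b (join a b) \<and> (\<forall>c. le a c \<and> le b c \<longrightarrow> le (join a b) c)) \<and>
     (\<forall>a. le bt a \<and> le a tp) \<and>
     (\<forall>a b c. le (meet c a) b \<longleftrightarrow> le c (imp a b))"

end

theory Submission
  imports Defs
begin

text \<open>Since the logic is closed under unions of chains, Zorn's lemma extends every theory
  omitting b to a maximal one omitting b, and such a maximal theory is totally prime: a
  proper intersection of strictly larger theories would have to contain b. Hence the order
  defined through prime theories coincides with the order read off the totally prime
  theories, where the connectives are evaluated pointwise, and the Heyting laws reduce to
  propositional reasoning inside each totally prime theory; residuation uses that the
  implication quantifies over all totally prime extensions.\<close>

lemma totally_prime_theory_imp_prime_theory:
  "totally_prime_theory Th T \<Longrightarrow> prime_theory Th T"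
  unfolding totally_prime_theory_def prime_theory_def by blast

lemma totally_prime_theory_in_theories: "totally_prime_theory Th T \<Longrightarrow> T \<in> Th"
  unfolding totally_prime_theory_def by blast

lemma maximal_omitting_imp_totally_prime:
  assumes M: "M \<in> Th" "b \<notin> M"
    and maximal: "\<And>X. X \<in> Th \<Longrightarrow> M \<subseteq> X \<Longrightarrow> b \<notin> X \<Longrightarrow> X = M"
  shows "totally_prime_theory Th M"
  unfolding totally_prime_theory_def
proof (intro conjI allI impI)
  fix F assume F: "F \<subseteq> Th \<and> F \<noteq> {} \<and> M = \<Inter>F"
  show "M \<in> F"
  proof (rule ccontr)
    assume "M \<notin> F"
    with F maximal have "\<forall>X\<in>F. b \<in> X" by blast
    with F M(2) show False by blast
  qed
qed (fact M(1))

lemma extend_to_totally_prime_theory: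
  assumes chains: "closed_union_chains Th" and P: "P \<in> Th" "b \<notin> P"
  obtains T where "totally_prime_theory Th T" "P \<subseteq> T" "b \<notin> T"
proof -
  let ?A = "{T \<in> Th. P \<subseteq> T \<and> b \<notin> T}"
  have "\<exists>M\<in>?A. \<forall>X\<in>?A. M \<subseteq> X \<longrightarrow> X = M"
  proof (rule subset_Zorn_nonempty)
    show "?A \<noteq> {}" using P by blast
  next
    fix C assume C: "C \<noteq> {}" "subset.chain ?A C"
    then have "C \<subseteq> ?A" "\<forall>X\<in>C. \<forall>Y\<in>C. X \<subseteq> Y \<or> Y \<subseteq> X"
      by (auto simp: subset_chain_def)
    with C(1) chains have "\<Union>C \<in> Th"
      unfolding closed_union_chains_def by blast
    with C(1) \<open>C \<subseteq> ?A\<close> show "\<Union>C \<in> ?A" by blast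
  qed
  then obtain M where "M \<in> ?A" and "\<forall>X\<in>?A. M \<subseteq> X \<longrightarrow> X = M" by blast
  then have "totally_prime_theory Th M" "P \<subseteq> M" "b \<notin> M"
    by (auto intro!: maximal_omitting_imp_totally_prime)
  then show thesis by (rule that)
qed

lemma logic_le_iff_totally_prime:
  assumes "closed_union_chains Th"
  shows "logic_le Th a b \<longleftrightarrow> (\<forall>T. totally_prime_theory Th T \<longrightarrow> a \<in> T \<longrightarrow> b \<in> T)"
proof
  assume "logic_le Th a b"
  then show "\<forall>T. totally_prime_theory Th T \<longrightarrow> a \<in> T \<longrightarrow> b \<in> T"
    unfolding logic_le_def S_set_def using totally_prime_theory_imp_prime_theory by blast
next
  assume tp: "\<forall>T. totally_prime_theory Th T \<longrightarrow> a \<in> T \<longrightarrow> b \<in> T"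
  show "logic_le Th a b" unfolding logic_le_def S_set_def
  proof safe
    fix P assume P: "prime_theory Th P" "a \<in> P"
    show "b \<in> P"
    proof (rule ccontr)
      assume "b \<notin> P"
      with P(1) obtain T where "totally_prime_theory Th T" "P \<subseteq> T" "b \<notin> T"
        using extend_to_totally_prime_theory[OF assms] unfolding prime_theory_def by blast
      with tp P(2) show False by blast
    qed
  qed
qed

lemma intuitionistic_abstract_logicD:
  assumes "intuitionistic_abstract_logic Th dsj cnj imp tp bt"
  shows "closed_union_chains Th"
    and "totally_prime_theory Th T \<Longrightarrow> dsj a b \<in> T \<longleftrightarrow> a \<in> T \<or> b \<in> T"
    and "totally_prime_theory Th T \<Longrightarrow> cnj a b \<in> T \<longleftrightarrow> a \<in> T \<and> b \<in> T"
    and "totally_prime_theory Th T \<Longrightarrow> imp a b \<in> T \<longleftrightarrow>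
           (\<forall>T'. totally_prime_theory Th T' \<and> T \<subseteq> T' \<longrightarrow> a \<in> T' \<longrightarrow> b \<in> T')"
    and "T \<in> Th \<Longrightarrow> tp \<in> T"
    and "T \<in> Th \<Longrightarrow> bt \<notin> T"
  using assms unfolding intuitionistic_abstract_logic_def by simp_all

lemma logic_le_cnj_iff_le_imp:
  assumes logic: "intuitionistic_abstract_logic Th dsj cnj imp tp bt"
  shows "logic_le Th (cnj c a) b \<longleftrightarrow> logic_le Th c (imp a b)"
proof -
  note le = logic_le_iff_totally_prime[OF intuitionistic_abstract_logicD(1)[OF logic]]
  note cnj = intuitionistic_abstract_logicD(3)[OF logic]
    and imp = intuitionistic_abstract_logicD(4)[OF logic]
  show ?thesis
  proof
    assume "logic_le Th (cnj c a) b"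
    then have ca_b: "\<And>T. totally_prime_theory Th T \<Longrightarrow> c \<in> T \<Longrightarrow> a \<in> T \<Longrightarrow> b \<in> T"
      unfolding le using cnj by blast
    show "logic_le Th c (imp a b)"
      unfolding le
    proof (intro allI impI)
      fix T assume T: "totally_prime_theory Th T" "c \<in> T"
      then show "imp a b \<in> T"
        unfolding imp[OF T(1)] using ca_b by blast
    qed
  next
    assume c_imp: "logic_le Th c (imp a b)"
    show "logic_le Th (cnj c a) b"
      unfolding le
    proof (intro allI impI)
      fix T assume T: "totally_prime_theory Th T" "cnj c a \<in> T"
      then have "c \<in> T" "a \<in> T" using cnj by blast+
      with T(1) c_imp have "imp a b \<in> T" unfolding le by blast
      with T(1) \<open>a \<in> T\<close> show "b \<in> T" unfolding imp[OF T(1)] by blast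
    qed
  qed
qed

theorem corollary4p3:
  fixes Th :: "'e set set"
    and dsj cnj imp :: "'e \<Rightarrow> 'e \<Rightarrow> 'e" and tp bt :: 'e
  assumes "intuitionistic_abstract_logic Th dsj cnj imp tp bt"
  shows "heyting_preorder (logic_le Th) cnj dsj imp bt tp"
proof -
  note le = logic_le_iff_totally_prime[OF intuitionistic_abstract_logicD(1)[OF assms]]
  note dsj = intuitionistic_abstract_logicD(2)[OF assms]
    and cnj = intuitionistic_abstract_logicD(3)[OF assms]
    and tp = intuitionistic_abstract_logicD(5)[OF assms totally_prime_theory_in_theories]
    and bt = intuitionistic_abstract_logicD(6)[OF assms totally_prime_theory_in_theories]
  show ?thesis
    unfolding heyting_preorder_def
  proof (intro conjI)
    show "\<forall>a b c. logic_le Th (cnj c a) b \<longleftrightarrow> logic_le Th c (imp a b)"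
      using logic_le_cnj_iff_le_imp[OF assms] by blast
  qed (unfold le, auto simp: dsj cnj tp bt)
qed

end
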